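(* Let $n\in\mathbb{N}$. If a finite set $X\subseteq\mathbb{N}$ is $\omega^{36n}$-large and exp-sparse, then it is $\mathrm{EM}$-$\omega^n$-large: for every colouring $P:[X]^2\to2$ there exists an $\omega^n$-large $Y\subseteq X$ such that $P$ is transitive on $[Y]^2$.
   Context: Ordinals below $\omega^\omega$ are in Cantor normal form; $\omega^j\cdot m$ = sum of $m$ copies of $\omega^j$. For $m\in\mathbb{N}$: $0[m]=0$, $(\beta+1)[m]=\beta$, $(\beta+\omega^{n})[m]=\beta+\omega^{n-1}\cdot m$ for $n\ge1$. A finite $X=\{x_0<\dots<x_{\ell-1}\}\subseteq\mathbb{N}$ is $\alpha$-large if $\alpha[x_0]\cdots[x_{\ell-1}]=0$. A set $X$ with $\min X\ge3$ is exp-sparse if $x<y$ in $X$ implies $4^x<y$. Pairs in $[Y]^2$ are ordered pairs $(x,y)$ with $x<y$; $P$ is transitive on $[Y]^2$ if both $\{(x,y):P(x,y)=0\}$ and $\{(x,y):P(x,y)=1\}$ restricted to $Y$ are transitive relations, i.e. for $x<y<z$ in $Y$, $P(x,y)=P(y,z)$ implies $P(x,z)=P(x,y)$. *)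

theory Defs
  imports Main
begin

text \<open>Ordinals below omega^omega in Cantor normal form
  omega^(e_1) + ... + omega^(e_k), e_1 >= ... >= e_k, are represented by the
  list [e_1, ..., e_k] of exponents (the empty list is 0).\<close>
type_synonym cnf = "nat list"

definition omega_pow :: "nat \<Rightarrow> cnf" where
  "omega_pow j = [j]"

text \<open>Fundamental sequence step alpha[m]:
  0[m] = 0, (beta+1)[m] = beta, (beta+omega^n)[m] = beta + omega^(n-1) * m.\<close>
definition fund :: "cnf \<Rightarrow> nat \<Rightarrow> cnf" where
  "fund \<alpha> m =
     (if \<alpha> = [] then []
      else if last \<alpha> = 0 then butlast \<alpha>
      else butlast \<alpha> @ replicate m (last \<alpha> - 1))"

definition large :: "cnf \<Rightarrow> nat set \<Rightarrow> bool" where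
  "large \<alpha> X \<longleftrightarrow> finite X \<and> foldl fund \<alpha> (sorted_list_of_set X) = []"

definition exp_sparse :: "nat set \<Rightarrow> bool" where
  "exp_sparse X \<longleftrightarrow> (\<forall>x\<in>X. 3 \<le> x) \<and> (\<forall>x\<in>X. \<forall>y\<in>X. x < y \<longrightarrow> 4 ^ x < y)"

definition transitive_on :: "(nat \<Rightarrow> nat \<Rightarrow> bool) \<Rightarrow> nat set \<Rightarrow> bool" where
  "transitive_on P Y \<longleftrightarrow>
     (\<forall>x\<in>Y. \<forall>y\<in>Y. \<forall>z\<in>Y. x < y \<and> y < z \<and> P x y = P y z \<longrightarrow> P x z = P x y)"

definition EM_large :: "cnf \<Rightarrow> nat set \<Rightarrow> bool" where
  "EM_large \<alpha> X \<longleftrightarrow>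
     (\<forall>P :: nat \<Rightarrow> nat \<Rightarrow> bool. \<exists>Y \<subseteq> X. large \<alpha> Y \<and> transitive_on P Y)"

end

theory Submission
  imports Defs
begin

(* Largeness is handled through its block characterisation: a set is
   omega^(g+1)-large iff, after removing its minimum m, it contains m successive
   omega^g-large blocks. Exp-sparseness yields a pigeonhole principle for blocks: if
   S is covered by A and B and contains 2(a+b) omega^g-blocks, then S \<inter> A contains
   a of them or S \<inter> B contains b. (Within two consecutive blocks C1 < C2, an
   element m of C1 can be put in front of (min C2) div 4 blocks of C2, because
   4^m < min C2.) Iterating it, an omega^(g+1)-large set whose minimum exceeds
   4^|Q| has an omega^g-large subset on which each of the colourings indexed by Q
   is constant.

   The theorem then follows by induction on n for omega^(4n)-large sets X (so
   omega^(4n) suffices instead of omega^(36n)). With y0 = min X, choose 2^y0 - 1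
   blocks above y0 and thin each of them twice, so that P x z only depends on the
   blocks of x < z. Among {y0} and these blocks, y0 + 1 can be chosen (including
   {y0}) on which P x z only depends on the block of x. Recursing inside each
   chosen block gives transitive omega^n-large pieces, whose union with {y0} is
   omega^(n+1)-large and transitive. *)

section \<open>Block characterisation of largeness\<close>

definition set_less :: "nat set \<Rightarrow> nat set \<Rightarrow> bool" where
  "set_less A B \<longleftrightarrow> (\<forall>x\<in>A. \<forall>y\<in>B. x < y)"

text \<open>\<open>omega_large g S\<close> is the block characterisation of \<open>\<omega>\<^sup>g\<close>-largeness and
  \<open>omega_blocks g k S\<close> says that \<open>S\<close> contains \<open>k\<close> successive
  \<open>\<omega>\<^sup>g\<close>-large blocks, i.e. is \<open>\<omega>\<^sup>g\<cdot>k\<close>-large.\<close>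

fun omega_large :: "nat \<Rightarrow> nat set \<Rightarrow> bool" where
  "omega_large 0 S \<longleftrightarrow> finite S \<and> S \<noteq> {}"
| "omega_large (Suc g) S \<longleftrightarrow> finite S \<and> S \<noteq> {} \<and>
     (\<exists>bs. length bs = Min S \<and> (\<forall>B\<in>set bs. omega_large g B) \<and> sorted_wrt set_less bs
        \<and> \<Union>(set bs) \<subseteq> S - {Min S})"

definition omega_blocks :: "nat \<Rightarrow> nat \<Rightarrow> nat set \<Rightarrow> bool" where
  "omega_blocks g k S \<longleftrightarrow>
     (\<exists>bs. length bs = k \<and> (\<forall>B\<in>set bs. omega_large g B) \<and> sorted_wrt set_less bs \<and> \<Union>(set bs) \<subseteq> S)"

lemma omega_large_Suc:
  "omega_large (Suc g) S \<longleftrightarrow> finite S \<and> S \<noteq> {} \<and> omega_blocks g (Min S) (S - {Min S})"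
  by (simp add: omega_blocks_def)

declare omega_large.simps(2) [simp del]

lemma omega_large_finite_nonempty: "omega_large g S \<Longrightarrow> finite S \<and> S \<noteq> {}"
  by (cases g) (simp_all add: omega_large_Suc)

lemma omega_blocks_0 [simp]: "omega_blocks g 0 S"
  unfolding omega_blocks_def by simp

lemma omega_blocks_mono: "omega_blocks g k S \<Longrightarrow> S \<subseteq> T \<Longrightarrow> omega_blocks g k T"
  unfolding omega_blocks_def by blast

lemma omega_blocks_of_list:
  assumes "sorted_wrt set_less bs" "\<forall>B\<in>set bs. omega_large g B \<and> B \<subseteq> S" "k \<le> length bs"
  shows "omega_blocks g k S"
  unfolding omega_blocks_def
  by (rule exI[of _ "take k bs"]) (use assms in \<open>auto simp: sorted_wrt_take dest: in_set_takeD\<close>)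

lemma omega_blocks_le:
  assumes "omega_blocks g k S" "j \<le> k"
  shows "omega_blocks g j S"
proof -
  obtain bs where "length bs = k" "\<forall>B\<in>set bs. omega_large g B" "sorted_wrt set_less bs"
      "\<Union>(set bs) \<subseteq> S"
    using assms(1) unfolding omega_blocks_def by blast
  then show ?thesis
    using omega_blocks_of_list[of bs g S j] assms(2) by blast
qed

lemma omega_blocks_Suc_imp_block: "omega_blocks g (Suc k) S \<Longrightarrow> \<exists>B\<subseteq>S. omega_large g B"
  unfolding omega_blocks_def by (metis Sup_le_iff length_Suc_conv list.set_intros(1))

lemma omega_blocks_Cons:
  assumes "omega_large g B" "B \<subseteq> S" "omega_blocks g k T" "T \<subseteq> S" "set_less B T"
  shows "omega_blocks g (Suc k) S"
proof -
  obtain bs where bs: "length bs = k" "\<forall>C\<in>set bs. omega_large g C" "sorted_wrt set_less bs"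
      "\<Union>(set bs) \<subseteq> T"
    using assms(3) unfolding omega_blocks_def by blast
  have "sorted_wrt set_less (B # bs)"
    using bs(3,4) assms(5) unfolding set_less_def by auto
  moreover have "\<forall>C\<in>set (B # bs). omega_large g C \<and> C \<subseteq> S"
    using bs(2,4) assms(1,2,4) by auto
  ultimately show ?thesis
    using omega_blocks_of_list[of "B # bs"] bs(1) by simp
qed

lemma omega_blocks_UN:
  fixes I :: "nat set"
  assumes "finite I" "\<forall>i\<in>I. omega_large g (W i)"
    and "\<forall>i\<in>I. \<forall>j\<in>I. i < j \<longrightarrow> set_less (W i) (W j)"
  shows "omega_blocks g (card I) (\<Union>i\<in>I. W i)"
proof (rule omega_blocks_of_list)
  show "sorted_wrt set_less (map W (sorted_list_of_set I))"
    unfolding sorted_wrt_map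
    by (rule sorted_wrt_mono_rel[OF _ strict_sorted_list_of_set]) (use assms in auto)
qed (use assms in auto)

lemma omega_large_mono:
  assumes S: "omega_large g S" and "S \<subseteq> T" "finite T"
  shows "omega_large g T"
proof (cases g)
  case 0
  then show ?thesis using assms by auto
next
  case (Suc h)
  have fin: "finite S" "S \<noteq> {}" using S omega_large_finite_nonempty by auto
  have "Min S \<in> T" using Min_in[OF fin] \<open>S \<subseteq> T\<close> by blast
  then have le: "Min T \<le> Min S" using \<open>finite T\<close> by simp
  have "S - {Min S} \<subseteq> T - {Min T}"
  proof
    fix x assume "x \<in> S - {Min S}"
    then have "x \<in> T" "Min S < x"
      using fin \<open>S \<subseteq> T\<close> Min_le[OF fin(1)] by (auto simp: le_neq_implies_less)
    then show "x \<in> T - {Min T}" using le by simp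
  qed
  moreover have "omega_blocks h (Min S) (S - {Min S})" using S Suc by (simp add: omega_large_Suc)
  ultimately have "omega_blocks h (Min T) (T - {Min T})"
    using le by (blast intro: omega_blocks_le omega_blocks_mono)
  moreover have "T \<noteq> {}" using \<open>Min S \<in> T\<close> by blast
  ultimately show ?thesis using Suc \<open>finite T\<close> by (simp add: omega_large_Suc)
qed

lemma omega_large_Suc_insert:
  assumes "finite D" "\<forall>y\<in>D. x < y" "omega_blocks g k D" "x \<le> k"
  shows "omega_large (Suc g) (insert x D)"
proof -
  have min: "Min (insert x D) = x"
    using assms(1,2) by (intro Min_eqI) (auto simp: less_imp_le)
  have "insert x D - {x} = D" using assms(2) by auto
  moreover have "omega_blocks g x D" using omega_blocks_le[OF assms(3,4)] .
  ultimately show ?thesis using assms(1) by (simp add: omega_large_Suc min)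
qed

lemma omega_large_SucD:
  assumes "omega_large (Suc g) S" "1 \<le> Min S"
  shows "omega_large g S"
proof -
  have S: "finite S" "omega_blocks g (Min S) (S - {Min S})"
    using assms(1) by (simp_all add: omega_large_Suc)
  have "omega_blocks g (Suc 0) (S - {Min S})"
    by (rule omega_blocks_le[OF S(2)]) (use assms(2) in simp)
  from omega_blocks_Suc_imp_block[OF this]
  obtain B where "B \<subseteq> S - {Min S}" "omega_large g B" by blast
  then show ?thesis using omega_large_mono[of g B S] S(1) by blast
qed

lemma omega_large_antimono:
  assumes "omega_large g S" "h \<le> g" "1 \<le> Min S"
  shows "omega_large h S"
  using assms(2,1)
proof (induction rule: dec_induct)
  case (step g)
  then show ?case using omega_large_SucD[OF _ assms(3)] by simp
qed

section \<open>Agreement with the fundamental-sequence definition\<close>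

lemma fund_append: "\<gamma> \<noteq> [] \<Longrightarrow> fund (\<beta> @ \<gamma>) m = \<beta> @ fund \<gamma> m"
  unfolding fund_def by (simp add: butlast_append)

lemma fund_singleton_Suc [simp]: "fund [Suc e] m = replicate m e"
  unfolding fund_def by simp

lemma fund_singleton_0 [simp]: "fund [0] m = []"
  unfolding fund_def by simp

lemma foldl_fund_append_split:
  "foldl fund (\<beta> @ \<gamma>) xs = [] \<Longrightarrow>
     \<exists>ys zs. xs = ys @ zs \<and> foldl fund \<gamma> ys = [] \<and> foldl fund \<beta> zs = []"
proof (induction xs arbitrary: \<gamma>)
  case (Cons x xs)
  show ?case
  proof (cases "\<gamma> = []")
    case True
    then show ?thesis using Cons.prems by (intro exI[of _ "[]"] exI[of _ "x # xs"]) simp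
  next
    case False
    then have "foldl fund (\<beta> @ fund \<gamma> x) xs = []" using Cons.prems by (simp add: fund_append)
    then obtain ys zs where "xs = ys @ zs" "foldl fund (fund \<gamma> x) ys = []" "foldl fund \<beta> zs = []"
      using Cons.IH by blast
    then show ?thesis by (intro exI[of _ "x # ys"] exI[of _ zs]) simp
  qed
qed simp

lemma foldl_fund_append_nonempty:
  "(\<forall>j<length ys. foldl fund \<gamma> (take j ys) \<noteq> []) \<Longrightarrow>
     foldl fund (\<beta> @ \<gamma>) ys = \<beta> @ foldl fund \<gamma> ys"
proof (induction ys arbitrary: \<gamma>)
  case (Cons y ys)
  have "\<gamma> \<noteq> []" using Cons.prems[rule_format, of 0] by simp
  moreover have "\<forall>j<length ys. foldl fund (fund \<gamma> y) (take j ys) \<noteq> []"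
    using Cons.prems[rule_format, of "Suc _"] by simp
  ultimately show ?case using Cons.IH by (simp add: fund_append)
qed simp

lemma foldl_fund_shortest_prefix:
  assumes "foldl fund \<gamma> ys = []"
  obtains j where "foldl fund \<gamma> (take j ys) = []" "\<forall>i<j. foldl fund \<gamma> (take i ys) \<noteq> []"
proof
  let ?P = "\<lambda>j. foldl fund \<gamma> (take j ys) = []"
  have "?P (length ys)" using assms by simp
  then show "?P (LEAST j. ?P j)" by (rule LeastI)
  show "\<forall>i<(LEAST j. ?P j). \<not> ?P i" using not_less_Least by blast
qed

lemma omega_blocks_of_foldl_replicate:
  assumes IH: "\<And>xs. sorted_wrt (<) xs \<Longrightarrow> foldl fund [e] xs = [] \<Longrightarrow> omega_large e (set xs)"
  shows "sorted_wrt (<) xs \<Longrightarrow> foldl fund (replicate k e) xs = [] \<Longrightarrow> omega_blocks e k (set xs)"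
proof (induction k arbitrary: xs)
  case (Suc k)
  have "foldl fund (replicate k e @ [e]) xs = []"
    using Suc.prems(2) by (simp add: replicate_append_same)
  then obtain ys zs where yz: "xs = ys @ zs" "foldl fund [e] ys = []" "foldl fund (replicate k e) zs = []"
    using foldl_fund_append_split by blast
  have "sorted_wrt (<) ys" "sorted_wrt (<) zs" "set_less (set ys) (set zs)"
    using Suc.prems(1) yz(1) by (auto simp: sorted_wrt_append set_less_def)
  then show ?case
    using omega_blocks_Cons[of e "set ys" "set xs" k "set zs"] IH Suc.IH yz by auto
qed simp

lemma omega_large_of_foldl:
  "sorted_wrt (<) xs \<Longrightarrow> foldl fund [e] xs = [] \<Longrightarrow> omega_large e (set xs)"
proof (induction e arbitrary: xs)
  case 0
  then show ?case by (cases xs) auto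
next
  case (Suc e)
  then obtain x xs' where xs: "xs = x # xs'" by (cases xs) auto
  have "omega_blocks e x (set xs')"
    using omega_blocks_of_foldl_replicate[OF Suc.IH] Suc.prems unfolding xs by simp
  then show ?case
    using omega_large_Suc_insert[of "set xs'" x e x] Suc.prems(1) unfolding xs by simp
qed

lemma large_imp_omega_large: "large (omega_pow e) X \<Longrightarrow> omega_large e X"
  unfolding large_def omega_pow_def
  using omega_large_of_foldl[of "sorted_list_of_set X" e] by simp

lemma foldl_replicate_of_omega_blocks:
  assumes IH: "\<And>B. omega_large e B \<Longrightarrow>
      \<exists>ys. sorted_wrt (<) ys \<and> set ys \<subseteq> B \<and> foldl fund [e] ys = []"
  shows "\<forall>B\<in>set bs. omega_large e B \<Longrightarrow> sorted_wrt set_less bs \<Longrightarrow>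
    \<exists>ys. sorted_wrt (<) ys \<and> set ys \<subseteq> \<Union>(set bs) \<and> foldl fund (replicate (length bs) e) ys = []"
proof (induction bs)
  case Nil
  show ?case by (intro exI[of _ "[]"]) simp
next
  case (Cons B bs)
  obtain ys0 where ys0: "sorted_wrt (<) ys0" "set ys0 \<subseteq> B" "foldl fund [e] ys0 = []"
    using IH[of B] Cons.prems(1) by auto
  obtain j where j: "foldl fund [e] (take j ys0) = []" "\<forall>i<j. foldl fund [e] (take i ys0) \<noteq> []"
    using foldl_fund_shortest_prefix[OF ys0(3)] by blast
  define ys where "ys = take j ys0"
  obtain zs where zs: "sorted_wrt (<) zs" "set zs \<subseteq> \<Union>(set bs)"
      "foldl fund (replicate (length bs) e) zs = []"
    using Cons by auto
  have "\<forall>x\<in>set ys. \<forall>y\<in>set zs. x < y"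
  proof (intro ballI)
    fix x y assume "x \<in> set ys" "y \<in> set zs"
    then obtain C where "x \<in> B" "C \<in> set bs" "y \<in> C"
      using ys0(2) zs(2) unfolding ys_def by (blast dest: in_set_takeD)
    then show "x < y" using Cons.prems(2) unfolding set_less_def by simp
  qed
  then have "sorted_wrt (<) (ys @ zs)"
    using ys0(1) zs(1) unfolding ys_def by (simp add: sorted_wrt_append sorted_wrt_take)
  moreover have "set (ys @ zs) \<subseteq> \<Union>(set (B # bs))"
    using ys0(2) zs(2) unfolding ys_def by (auto dest: in_set_takeD)
  moreover have "foldl fund (replicate (length bs) e @ [e]) ys = replicate (length bs) e"
    using foldl_fund_append_nonempty[of ys "[e]" "replicate (length bs) e"] j
    unfolding ys_def by simp
  then have "foldl fund (replicate (length (B # bs)) e) (ys @ zs) = []"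
    using zs(3) by (simp add: replicate_append_same)
  ultimately show ?case by blast
qed

lemma foldl_of_omega_large:
  "omega_large e S \<Longrightarrow> \<exists>ys. sorted_wrt (<) ys \<and> set ys \<subseteq> S \<and> foldl fund [e] ys = []"
proof (induction e arbitrary: S)
  case 0
  then have "Min S \<in> S" by simp
  then show ?case by (intro exI[of _ "[Min S]"]) simp
next
  case (Suc e)
  have S: "finite S" "S \<noteq> {}" using Suc.prems omega_large_finite_nonempty by blast+
  obtain bs where bs: "length bs = Min S" "\<forall>B\<in>set bs. omega_large e B" "sorted_wrt set_less bs"
      "\<Union>(set bs) \<subseteq> S - {Min S}"
    using Suc.prems unfolding omega_large_Suc omega_blocks_def by blast
  obtain zs where zs: "sorted_wrt (<) zs" "set zs \<subseteq> \<Union>(set bs)"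
      "foldl fund (replicate (length bs) e) zs = []"
    using foldl_replicate_of_omega_blocks[OF Suc.IH bs(2,3)] by blast
  have "Min S < y" if "y \<in> set zs" for y
  proof -
    have "y \<in> S" "y \<noteq> Min S" using that zs(2) bs(4) by auto
    then show ?thesis using Min_le[OF S(1)] by (simp add: order.not_eq_order_implies_strict)
  qed
  then have "sorted_wrt (<) (Min S # zs)" using zs(1) by simp
  moreover have "set (Min S # zs) \<subseteq> S" using zs(2) bs(4) S by auto
  moreover have "foldl fund [Suc e] (Min S # zs) = []" using zs(3) bs(1) by simp
  ultimately show ?case by blast
qed

lemma omega_large_imp_large_subset:
  assumes "omega_large e S"
  shows "\<exists>Y\<subseteq>S. large (omega_pow e) Y"
proof -
  obtain ys where ys: "sorted_wrt (<) ys" "set ys \<subseteq> S" "foldl fund [e] ys = []"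
    using foldl_of_omega_large[OF assms] by blast
  have "sorted_list_of_set (set ys) = ys"
    using ys(1) by (simp add: sorted_list_of_set.idem_if_sorted_distinct strict_sorted_iff)
  then have "large (omega_pow e) (set ys)"
    using ys(3) by (simp add: large_def omega_pow_def)
  then show ?thesis using ys(2) by blast
qed

section \<open>A pigeonhole principle for exp-sparse sets\<close>

lemma exp_sparse_subset: "exp_sparse S \<Longrightarrow> T \<subseteq> S \<Longrightarrow> exp_sparse T"
  unfolding exp_sparse_def by blast

lemma four_mult_le_four_power: "4 * m \<le> (4::nat) ^ m"
proof (induction m)
  case (Suc m)
  have "1 \<le> (4::nat) ^ m" "(4::nat) ^ Suc m = 4 * 4 ^ m" by simp_all
  then show ?case using Suc.IH by (simp only: mult_Suc_right) arith
qed simp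

lemma exp_sparse_le_div4:
  assumes "exp_sparse S" "m \<in> S" "c \<in> S" "m < c"
  shows "m \<le> c div 4"
proof -
  have "4 ^ m < c" using assms unfolding exp_sparse_def by blast
  then show ?thesis using four_mult_le_four_power[of m] by simp
qed

lemma exp_sparse_card_below:
  assumes "exp_sparse X" "t \<in> X"
  shows "4 ^ card (X \<inter> {..<t}) \<le> t"
  using assms(2)
proof (induction t rule: less_induct)
  case (less t)
  show ?case
  proof (cases "X \<inter> {..<t} = {}")
    case True
    then show ?thesis using less.prems assms(1) unfolding exp_sparse_def by auto
  next
    case False
    define s where "s = Max (X \<inter> {..<t})"
    have s: "s \<in> X" "s < t" using Max_in[OF _ False] unfolding s_def by auto
    have "X \<inter> {..<t} = insert s (X \<inter> {..<s})"
      using s Max_ge[of "X \<inter> {..<t}"] unfolding s_def by fastforce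
    then have "card (X \<inter> {..<t}) = Suc (card (X \<inter> {..<s}))" by simp
    moreover have "4 ^ card (X \<inter> {..<s}) \<le> s" using less.IH[OF s(2,1)] .
    moreover have "4 ^ s < t" using assms(1) s less.prems unfolding exp_sparse_def by blast
    ultimately show ?thesis using four_mult_le_four_power[of s] by simp
  qed
qed

lemma monochromatic_blocks_of_pairs:
  assumes pair: "\<And>C1 C2. omega_large a C1 \<Longrightarrow> omega_large a C2 \<Longrightarrow> C1 \<subseteq> S \<Longrightarrow> C2 \<subseteq> S \<Longrightarrow>
      set_less C1 C2 \<Longrightarrow> \<exists>p\<subseteq>C1 \<union> C2. omega_large a p \<and> (p \<subseteq> A \<or> p \<subseteq> B)"
  shows "sorted_wrt set_less bs \<Longrightarrow> \<forall>C\<in>set bs. omega_large a C \<and> C \<subseteq> S \<Longrightarrow>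
    \<exists>ps. length ps = length bs div 2 \<and> sorted_wrt set_less ps \<and>
      (\<forall>p\<in>set ps. omega_large a p \<and> p \<subseteq> \<Union>(set bs) \<and> (p \<subseteq> A \<or> p \<subseteq> B))"
proof (induction bs rule: induct_list012)
  case (3 C1 C2 bs)
  have C: "omega_large a C1" "omega_large a C2" "C1 \<subseteq> S" "C2 \<subseteq> S" "set_less C1 C2"
    and below: "\<forall>C\<in>set bs. set_less C1 C \<and> set_less C2 C"
    and rest: "sorted_wrt set_less bs" "\<forall>C\<in>set bs. omega_large a C \<and> C \<subseteq> S"
    using "3.prems" by simp_all
  obtain p where p: "p \<subseteq> C1 \<union> C2" "omega_large a p" "p \<subseteq> A \<or> p \<subseteq> B"
    using pair[OF C] by blast
  obtain ps where ps: "length ps = length bs div 2" "sorted_wrt set_less ps"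
      "\<forall>q\<in>set ps. omega_large a q \<and> q \<subseteq> \<Union>(set bs) \<and> (q \<subseteq> A \<or> q \<subseteq> B)"
    using "3.IH"(1)[OF rest] by blast
  have "set_less p q" if "q \<in> set ps" for q
    unfolding set_less_def
  proof (intro ballI)
    fix x y assume "x \<in> p" "y \<in> q"
    have "q \<subseteq> \<Union>(set bs)" using that ps(3) by blast
    then obtain C where "C \<in> set bs" "y \<in> C" using \<open>y \<in> q\<close> by blast
    moreover have "x \<in> C1 \<or> x \<in> C2" using p(1) \<open>x \<in> p\<close> by blast
    ultimately show "x < y" using below unfolding set_less_def by blast
  qed
  then have "sorted_wrt set_less (p # ps)" using ps(2) by simp
  moreover have "length (p # ps) = length (C1 # C2 # bs) div 2" using ps(1) by simp
  moreover have "\<forall>q\<in>set (p # ps). omega_large a q \<and> q \<subseteq> \<Union>(set (C1 # C2 # bs)) \<and> (q \<subseteq> A \<or> q \<subseteq> B)"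
    using p ps(3) by auto
  ultimately show ?case by blast
qed simp_all

lemma omega_blocks_pigeonhole_of_pairs:
  assumes pair: "\<And>C1 C2. omega_large a C1 \<Longrightarrow> omega_large a C2 \<Longrightarrow> C1 \<subseteq> S \<Longrightarrow> C2 \<subseteq> S \<Longrightarrow>
      set_less C1 C2 \<Longrightarrow> \<exists>p\<subseteq>C1 \<union> C2. omega_large a p \<and> (p \<subseteq> A \<or> p \<subseteq> B)"
    and "omega_blocks a (2 * (kA + kB)) S"
  shows "omega_blocks a kA (S \<inter> A) \<or> omega_blocks a kB (S \<inter> B)"
proof -
  obtain bs where bs: "length bs = 2 * (kA + kB)" "\<forall>C\<in>set bs. omega_large a C"
      "sorted_wrt set_less bs" "\<Union>(set bs) \<subseteq> S"
    using assms(2) unfolding omega_blocks_def by blast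
  have "\<forall>C\<in>set bs. omega_large a C \<and> C \<subseteq> S" using bs(2,4) by blast
  from monochromatic_blocks_of_pairs[OF pair bs(3) this]
  obtain ps where ps0: "length ps = length bs div 2" "sorted_wrt set_less ps"
      "\<forall>p\<in>set ps. omega_large a p \<and> p \<subseteq> \<Union>(set bs) \<and> (p \<subseteq> A \<or> p \<subseteq> B)"
    by blast
  have ps: "length ps = kA + kB" "sorted_wrt set_less ps"
      "\<forall>p\<in>set ps. omega_large a p \<and> p \<subseteq> S \<and> (p \<subseteq> A \<or> p \<subseteq> B)"
    using ps0 bs(1) subset_trans[OF _ bs(4)] by simp_all
  let ?psA = "filter (\<lambda>p. p \<subseteq> A) ps" and ?psB = "filter (\<lambda>p. \<not> p \<subseteq> A) ps"
  have "length ?psA + length ?psB = kA + kB" using ps(1) by (rule sum_length_filter_compl[THEN trans])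
  then consider "kA \<le> length ?psA" | "kB \<le> length ?psB" by linarith
  then show ?thesis
  proof cases
    case 1
    have "\<forall>p\<in>set ?psA. omega_large a p \<and> p \<subseteq> S \<inter> A" using ps(3) by auto
    with 1 have "omega_blocks a kA (S \<inter> A)"
      using omega_blocks_of_list[OF sorted_wrt_filter[OF ps(2)]] by blast
    then show ?thesis ..
  next
    case 2
    have "\<forall>p\<in>set ?psB. omega_large a p \<and> p \<subseteq> S \<inter> B" using ps(3) by auto
    with 2 have "omega_blocks a kB (S \<inter> B)"
      using omega_blocks_of_list[OF sorted_wrt_filter[OF ps(2)]] by blast
    then show ?thesis ..
  qed
qed

lemma omega_large_Suc_monochromatic_in_pair:
  assumes "exp_sparse S" "S \<subseteq> A \<union> B" "omega_large (Suc a) C1" "C1 \<subseteq> S"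
    and "C2 \<subseteq> S" "finite C2" "C2 \<noteq> {}" "set_less C1 C2"
    and "omega_blocks a (Min C2 div 4) ((C2 - {Min C2}) \<inter> A)"
  shows "\<exists>p\<subseteq>C1 \<union> C2. omega_large (Suc a) p \<and> (p \<subseteq> A \<or> p \<subseteq> B)"
proof (cases "C1 \<subseteq> B")
  case True
  then show ?thesis using assms(3) by blast
next
  case False
  then obtain m where m: "m \<in> C1" "m \<in> A" using assms(2,4) by blast
  define D where "D = (C2 - {Min C2}) \<inter> A"
  have below: "\<forall>y\<in>C2. m < y" using assms(8) m(1) unfolding set_less_def by blast
  then have "m \<le> Min C2 div 4"
    using exp_sparse_le_div4[OF assms(1)] m(1) assms(4,5) Min_in[OF assms(6,7)] by blast
  then have "omega_large (Suc a) (insert m D)"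
    using omega_large_Suc_insert[of D m a] assms(6,9) below unfolding D_def by simp
  moreover have "insert m D \<subseteq> C1 \<union> C2" "insert m D \<subseteq> A" using m unfolding D_def by auto
  ultimately show ?thesis by blast
qed

lemma omega_blocks_pigeonhole:
  "exp_sparse S \<Longrightarrow> omega_blocks a (2 * (kA + kB)) S \<Longrightarrow> S \<subseteq> A \<union> B \<Longrightarrow>
     omega_blocks a kA (S \<inter> A) \<or> omega_blocks a kB (S \<inter> B)"
proof (induction a arbitrary: S kA kB A B)
  case 0
  show ?case
  proof (rule omega_blocks_pigeonhole_of_pairs[OF _ "0.prems"(2)])
    fix C1 C2 assume "omega_large 0 C1" "C1 \<subseteq> S"
    then obtain m where "m \<in> C1" "m \<in> A \<union> B" using "0.prems"(3) by auto
    then show "\<exists>p\<subseteq>C1 \<union> C2. omega_large 0 p \<and> (p \<subseteq> A \<or> p \<subseteq> B)"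
      by (intro exI[of _ "{m}"]) auto
  qed
next
  case (Suc a)
  show ?case
  proof (rule omega_blocks_pigeonhole_of_pairs[OF _ Suc.prems(2)])
    fix C1 C2
    assume C: "omega_large (Suc a) C1" "omega_large (Suc a) C2" "C1 \<subseteq> S" "C2 \<subseteq> S"
      "set_less C1 C2"
    define c where "c = Min C2"
    have C2: "finite C2" "C2 \<noteq> {}" "omega_blocks a c (C2 - {c})"
      using C(2) unfolding c_def omega_large_Suc by auto
    have "omega_blocks a (2 * (c div 4 + c div 4)) (C2 - {c})"
      by (rule omega_blocks_le[OF C2(3)]) presburger
    moreover have "exp_sparse (C2 - {c})" using exp_sparse_subset Suc.prems(1) C(4) by blast
    moreover have "C2 - {c} \<subseteq> A \<union> B" using Suc.prems(3) C(4) by blast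
    ultimately consider "omega_blocks a (c div 4) ((C2 - {c}) \<inter> A)"
      | "omega_blocks a (c div 4) ((C2 - {c}) \<inter> B)"
      using Suc.IH[of "C2 - {c}" "c div 4" "c div 4" A B] by blast
    then show "\<exists>p\<subseteq>C1 \<union> C2. omega_large (Suc a) p \<and> (p \<subseteq> A \<or> p \<subseteq> B)"
    proof cases
      case 1
      show ?thesis
        using omega_large_Suc_monochromatic_in_pair[OF Suc.prems(1,3) C(1,3,4) C2(1,2) C(5)
            1[unfolded c_def]] .
    next
      case 2
      have "S \<subseteq> B \<union> A" using Suc.prems(3) by blast
      from omega_large_Suc_monochromatic_in_pair[OF Suc.prems(1) this C(1,3,4) C2(1,2) C(5)
          2[unfolded c_def]]
      show ?thesis by blast
    qed
  qed
qed

definition homogeneous_on :: "('q \<Rightarrow> nat \<Rightarrow> bool) \<Rightarrow> 'q set \<Rightarrow> nat set \<Rightarrow> bool" where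
  "homogeneous_on col Q D \<longleftrightarrow> (\<forall>q\<in>Q. \<forall>x\<in>D. \<forall>y\<in>D. col q x = col q y)"

lemma homogeneous_onD: "homogeneous_on col Q D \<Longrightarrow> q \<in> Q \<Longrightarrow> x \<in> D \<Longrightarrow> y \<in> D \<Longrightarrow> col q x = col q y"
  unfolding homogeneous_on_def by blast

lemma homogeneous_on_subset: "homogeneous_on col Q D \<Longrightarrow> D' \<subseteq> D \<Longrightarrow> homogeneous_on col Q D'"
  unfolding homogeneous_on_def by blast

lemma omega_blocks_homogeneous_subset:
  assumes "finite Q"
  shows "exp_sparse S \<Longrightarrow> omega_blocks a (4 ^ card Q * k) S \<Longrightarrow>
    \<exists>S'\<subseteq>S. omega_blocks a k S' \<and> homogeneous_on col Q S'"
  using assms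
proof (induction Q arbitrary: S rule: finite_induct)
  case empty
  then show ?case by (intro exI[of _ S]) (simp add: homogeneous_on_def)
next
  case (insert q Q)
  let ?m = "4 ^ card Q * k" and ?A = "{x. col q x}" and ?B = "{x. \<not> col q x}"
  have "4 ^ card (insert q Q) * k = 2 * (?m + ?m)" using insert.hyps by simp
  from insert.prems(2)[unfolded this]
  have "omega_blocks a (2 * (?m + ?m)) S" "S \<subseteq> ?A \<union> ?B" by blast+
  from omega_blocks_pigeonhole[OF insert.prems(1) this]
  obtain S1 where S1: "S1 \<subseteq> S" "omega_blocks a ?m S1" "homogeneous_on col {q} S1"
  proof
    assume "omega_blocks a ?m (S \<inter> ?A)"
    from that[OF _ this] show thesis unfolding homogeneous_on_def by blast
  next
    assume "omega_blocks a ?m (S \<inter> ?B)"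
    from that[OF _ this] show thesis unfolding homogeneous_on_def by blast
  qed
  from insert.IH[OF exp_sparse_subset[OF insert.prems(1) S1(1)] S1(2)]
  obtain S' where S': "S' \<subseteq> S1" "omega_blocks a k S'" "homogeneous_on col Q S'"
    by blast
  have "homogeneous_on col (insert q Q) S'"
    using S'(3) homogeneous_on_subset[OF S1(3) S'(1)] unfolding homogeneous_on_def by blast
  then show ?case using S1(1) S'(1,2) by blast
qed

lemma omega_large_Suc_homogeneous_subset:
  assumes "omega_large (Suc g) D" "exp_sparse D" "finite Q" "4 ^ card Q \<le> Min D"
  shows "\<exists>D'\<subseteq>D. omega_large g D' \<and> homogeneous_on col Q D'"
proof -
  have "omega_blocks g (Min D) (D - {Min D})" using assms(1) by (simp add: omega_large_Suc)
  then have blocks: "omega_blocks g (4 ^ card Q * Suc 0) (D - {Min D})"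
    by (rule omega_blocks_le) (use assms(4) in simp)
  have sparse: "exp_sparse (D - {Min D})" using exp_sparse_subset[OF assms(2)] by blast
  from omega_blocks_homogeneous_subset[OF assms(3) sparse blocks]
  obtain S' where S': "S' \<subseteq> D - {Min D}" "omega_blocks g (Suc 0) S'" "homogeneous_on col Q S'"
    by blast
  from omega_blocks_Suc_imp_block[OF S'(2)]
  obtain D' where "D' \<subseteq> S'" "omega_large g D'" by blast
  then show ?thesis using S'(1) homogeneous_on_subset[OF S'(3)] by blast
qed

section \<open>Transitive subsets\<close>

lemma prehomogeneous_subset:
  fixes c :: "nat \<Rightarrow> nat \<Rightarrow> bool"
  assumes "finite J" "2 ^ m \<le> card J"
  shows "\<exists>I\<subseteq>J. Min J \<in> I \<and> m + 1 \<le> card I \<and> (\<exists>h. \<forall>i\<in>I. \<forall>j\<in>I. i < j \<longrightarrow> c i j = h i)"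
  using assms
proof (induction m arbitrary: J)
  case 0
  then have "Min J \<in> J" by (intro Min_in) auto
  then show ?case by (intro exI[of _ "{Min J}"]) auto
next
  case (Suc m)
  have "(0::nat) < 2 ^ Suc m" by simp
  then have "J \<noteq> {}" using Suc.prems(2) by auto
  define j0 where "j0 = Min J"
  have j0: "j0 \<in> J" "\<forall>j\<in>J. j0 \<le> j" using Suc.prems(1) \<open>J \<noteq> {}\<close> unfolding j0_def by auto
  obtain b where big: "2 ^ m \<le> card {j \<in> J - {j0}. c j0 j = b}"
  proof -
    let ?T = "{j \<in> J - {j0}. c j0 j = True}" and ?F = "{j \<in> J - {j0}. c j0 j = False}"
    have "card ?T + card ?F = card (J - {j0})"
      by (subst card_Un_disjoint[symmetric]) (use Suc.prems(1) in \<open>auto intro: arg_cong[where f = card]\<close>)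
    also have "\<dots> = card J - 1" using j0(1) Suc.prems(1) by simp
    finally have "card ?T + card ?F = card J - 1" .
    moreover have "2 * 2 ^ m \<le> card J" using Suc.prems(2) by simp
    ultimately have "2 ^ m \<le> card ?T \<or> 2 ^ m \<le> card ?F" by arith
    then show thesis using that by blast
  qed
  define Jb where "Jb = {j \<in> J - {j0}. c j0 j = b}"
  have "finite Jb" using Suc.prems(1) unfolding Jb_def by simp
  from Suc.IH[OF this big[folded Jb_def]]
  obtain I h where I: "I \<subseteq> Jb" "m + 1 \<le> card I" "\<forall>i\<in>I. \<forall>j\<in>I. i < j \<longrightarrow> c i j = h i"
    by blast
  have "finite I" "j0 \<notin> I" using I(1) \<open>finite Jb\<close> finite_subset unfolding Jb_def by auto
  then have "Suc m + 1 \<le> card (insert j0 I)" using I(2) by simp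
  moreover have "insert j0 I \<subseteq> J" using I(1) j0(1) unfolding Jb_def by blast
  moreover have "\<forall>i\<in>insert j0 I. \<forall>j\<in>insert j0 I. i < j \<longrightarrow> c i j = (h(j0 := b)) i"
  proof (intro ballI impI)
    fix i j assume ij: "i \<in> insert j0 I" "j \<in> insert j0 I" "i < j"
    have "j \<in> I" using ij \<open>insert j0 I \<subseteq> J\<close> j0(2) by (metis insert_iff leD subsetD)
    show "c i j = (h(j0 := b)) i"
    proof (cases "i = j0")
      case True
      then show ?thesis using \<open>j \<in> I\<close> I(1) unfolding Jb_def by auto
    next
      case False
      then show ?thesis using \<open>j \<in> I\<close> ij I(3) by auto
    qed
  qed
  ultimately show ?case unfolding j0_def by blast
qed

lemma transitive_on_UN:
  fixes W :: "'i::linorder \<Rightarrow> nat set"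
  assumes trans: "\<forall>i\<in>I. transitive_on P (W i)"
    and ordered: "\<forall>i\<in>I. \<forall>j\<in>I. i < j \<longrightarrow> set_less (W i) (W j)"
    and colour: "\<forall>i\<in>I. \<forall>j\<in>I. i < j \<longrightarrow> (\<forall>x\<in>W i. \<forall>z\<in>W j. P x z = h i)"
  shows "transitive_on P (\<Union>i\<in>I. W i)"
  unfolding transitive_on_def
proof (intro ballI impI)
  fix x y z assume "x \<in> (\<Union>i\<in>I. W i)" "y \<in> (\<Union>i\<in>I. W i)" "z \<in> (\<Union>i\<in>I. W i)"
    and xyz: "x < y \<and> y < z \<and> P x y = P y z"
  then obtain i j l where ijl: "i \<in> I" "x \<in> W i" "j \<in> I" "y \<in> W j" "l \<in> I" "z \<in> W l"
    by blast
  have index_le: "i' \<le> j'" if "i' \<in> I" "j' \<in> I" "u \<in> W i'" "v \<in> W j'" "u < v" for i' j' u v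
  proof (rule ccontr)
    assume "\<not> i' \<le> j'"
    then have "set_less (W j') (W i')" using ordered that(1,2) by (simp add: not_le)
    then show False using that(3-5) unfolding set_less_def by fastforce
  qed
  have "i \<le> j" "j \<le> l" using index_le ijl xyz by blast+
  consider "i < j" | "i = j" "j < l" | "i = j" "j = l"
    using \<open>i \<le> j\<close> \<open>j \<le> l\<close> by (auto simp: le_less)
  then show "P x z = P x y"
  proof cases
    case 1
    then have "P x y = h i" "P x z = h i" using colour ijl \<open>j \<le> l\<close> by auto
    then show ?thesis by simp
  next
    case 2
    then have "P x z = h i" "P y z = h i" using colour ijl by auto
    then show ?thesis using xyz by simp
  next
    case 3
    then show ?thesis using trans ijl xyz unfolding transitive_on_def by blast
  qed
qed

lemma set_less_mono: "set_less A B \<Longrightarrow> A' \<subseteq> A \<Longrightarrow> B' \<subseteq> B \<Longrightarrow> set_less A' B'"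
  unfolding set_less_def by blast

lemma exp_sparse_blocks_above:
  assumes sparse: "exp_sparse X" and large: "omega_large (Suc (Suc g)) X" and "k \<le> 4 ^ Min X"
  obtains R where "\<forall>j\<in>{1..k}. omega_large g (R j) \<and> R j \<subseteq> X \<and> (\<forall>x\<in>R j. Min X < x \<and> 4 ^ k < x)"
    and "\<forall>i\<in>{1..k}. \<forall>j\<in>{1..k}. i < j \<longrightarrow> set_less (R i) (R j)"
proof -
  txt \<open>The blocks are taken inside the first block \<open>B\<close> of \<open>X - {Min X}\<close>: its minimum
    \<open>b\<close> exceeds \<open>4 ^ Min X \<ge> k\<close>, and the elements of its sub-blocks exceed \<open>4 ^ b\<close>.\<close>
  define y0 where "y0 = Min X"
  have X: "finite X" "X \<noteq> {}" "omega_blocks (Suc g) y0 (X - {y0})"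
    using large unfolding y0_def omega_large_Suc by auto
  have "y0 \<in> X" using Min_in[OF X(1,2)] unfolding y0_def .
  then have "3 \<le> y0" using sparse unfolding exp_sparse_def by blast
  have "omega_blocks (Suc g) (Suc 0) (X - {y0})"
    by (rule omega_blocks_le[OF X(3)]) (use \<open>3 \<le> y0\<close> in simp)
  from omega_blocks_Suc_imp_block[OF this]
  obtain B where B: "B \<subseteq> X - {y0}" "omega_large (Suc g) B" by blast
  define b where "b = Min B"
  have Bb: "finite B" "B \<noteq> {}" "omega_blocks g b (B - {b})"
    using B(2) unfolding b_def omega_large_Suc by auto
  have "b \<in> B" using Min_in[OF Bb(1,2)] unfolding b_def .
  then have "b \<in> X" "b \<noteq> y0" using B(1) by auto
  then have "y0 < b" using Min_le[OF X(1)] unfolding y0_def by (metis order.not_eq_order_implies_strict)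
  then have "4 ^ y0 < b" using sparse \<open>y0 \<in> X\<close> \<open>b \<in> X\<close> unfolding exp_sparse_def by blast
  then have "k < b" using assms(3) unfolding y0_def by linarith
  obtain bs where bs: "length bs = b" "\<forall>C\<in>set bs. omega_large g C" "sorted_wrt set_less bs"
      "\<Union>(set bs) \<subseteq> B - {b}"
    using Bb(3) unfolding omega_blocks_def by blast
  define R where "R j = bs ! (j - 1)" for j
  have R_in: "R j \<in> set bs" if "j \<in> {1..k}" for j
    using that \<open>k < b\<close> bs(1) unfolding R_def by auto
  have above: "y0 < x \<and> 4 ^ k < x" if "j \<in> {1..k}" "x \<in> R j" for j x
  proof -
    have "x \<in> B" "x \<noteq> b" using R_in[OF that(1)] that(2) bs(4) by blast+
    then have "b < x" using Min_le[OF Bb(1)] unfolding b_def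
      by (simp add: order.not_eq_order_implies_strict)
    moreover have "x \<in> X" using \<open>x \<in> B\<close> B(1) by blast
    ultimately have "4 ^ b < x" using sparse \<open>b \<in> X\<close> unfolding exp_sparse_def by blast
    moreover have "4 ^ k \<le> (4::nat) ^ b" using \<open>k < b\<close> by (simp add: power_increasing)
    ultimately show ?thesis using \<open>y0 < b\<close> \<open>b < x\<close> by linarith
  qed
  have "omega_large g (R j) \<and> R j \<subseteq> X \<and> (\<forall>x\<in>R j. Min X < x \<and> 4 ^ k < x)"
    if "j \<in> {1..k}" for j
  proof (intro conjI)
    show "omega_large g (R j)" using R_in[OF that] bs(2) by blast
    show "R j \<subseteq> X" using R_in[OF that] bs(4) B(1) by blast
    show "\<forall>x\<in>R j. Min X < x \<and> 4 ^ k < x" using above[OF that] unfolding y0_def by blast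
  qed
  moreover have "set_less (R i) (R j)" if "i \<in> {1..k}" "j \<in> {1..k}" "i < j" for i j
    unfolding R_def
    by (rule sorted_wrt_nth_less[OF bs(3)]) (use that \<open>k < b\<close> bs(1) in auto)
  ultimately show thesis using that[of R] by blast
qed

lemma omega_large_Suc_homogeneous_below:
  assumes "exp_sparse X" "R \<subseteq> X" "omega_large (Suc g) R"
  shows "\<exists>D\<subseteq>R. omega_large g D \<and> homogeneous_on P (X \<inter> {..<Min R}) D"
proof -
  have "finite R" "R \<noteq> {}" using assms(3) omega_large_finite_nonempty by blast+
  then have "Min R \<in> X" using assms(2) Min_in by blast
  have "finite (X \<inter> {..<Min R})" by simp
  from omega_large_Suc_homogeneous_subset[OF assms(3) exp_sparse_subset[OF assms(1,2)] this
      exp_sparse_card_below[OF assms(1) \<open>Min R \<in> X\<close>]]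
  show ?thesis .
qed

lemma doubly_homogeneous_subblocks:
  fixes P :: "nat \<Rightarrow> nat \<Rightarrow> bool"
  assumes sparse: "exp_sparse X"
    and R: "\<forall>j\<in>{1..k}. omega_large (Suc (Suc g)) (R j) \<and> R j \<subseteq> X \<and> (\<forall>x\<in>R j. 4 ^ k < x)"
  obtains D1 D2 where
    "\<forall>j\<in>{1..k}. D1 j \<subseteq> R j \<and> Min (D1 j) \<in> D1 j \<and> homogeneous_on P (X \<inter> {..<Min (R j)}) (D1 j)"
    "\<forall>i\<in>{1..k}. D2 i \<subseteq> D1 i \<and> omega_large g (D2 i) \<and>
      homogeneous_on (\<lambda>j x. P x (Min (D1 j))) {i<..k} (D2 i)"
proof -
  have R_sub: "R j \<subseteq> X" and R_large: "omega_large (Suc (Suc g)) (R j)"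
    and R_above: "\<forall>x\<in>R j. 4 ^ k < x" if "j \<in> {1..k}" for j
    using R that by blast+
  have "\<forall>j\<in>{1..k}. \<exists>D\<subseteq>R j. omega_large (Suc g) D \<and> homogeneous_on P (X \<inter> {..<Min (R j)}) D"
    using omega_large_Suc_homogeneous_below[OF sparse R_sub R_large] by blast
  from bchoice[OF this]
  obtain D1 where D1: "\<forall>j\<in>{1..k}. D1 j \<subseteq> R j \<and> omega_large (Suc g) (D1 j) \<and>
      homogeneous_on P (X \<inter> {..<Min (R j)}) (D1 j)"
    by blast
  have D1_min: "Min (D1 j) \<in> D1 j" if "j \<in> {1..k}" for j
  proof -
    have "omega_large (Suc g) (D1 j)" using D1 that by blast
    then show ?thesis using omega_large_finite_nonempty Min_in by blast
  qed
  have "\<exists>D\<subseteq>D1 i. omega_large g D \<and> homogeneous_on (\<lambda>j x. P x (Min (D1 j))) {i<..k} D"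
    if i: "i \<in> {1..k}" for i
  proof (rule omega_large_Suc_homogeneous_subset)
    show "omega_large (Suc g) (D1 i)" using D1 i by blast
    show "exp_sparse (D1 i)" using exp_sparse_subset[OF sparse] D1 R_sub[OF i] i by blast
    have "4 ^ k < Min (D1 i)" using R_above[OF i] D1 D1_min[OF i] i by blast
    moreover have "4 ^ card {i<..k} \<le> (4::nat) ^ k" by (simp add: power_increasing)
    ultimately show "4 ^ card {i<..k} \<le> Min (D1 i)" by linarith
  qed simp
  then have "\<forall>i\<in>{1..k}. \<exists>D\<subseteq>D1 i. omega_large g D \<and>
      homogeneous_on (\<lambda>j x. P x (Min (D1 j))) {i<..k} D"
    by blast
  from bchoice[OF this]
  obtain D2 where "\<forall>i\<in>{1..k}. D2 i \<subseteq> D1 i \<and> omega_large g (D2 i) \<and>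
      homogeneous_on (\<lambda>j x. P x (Min (D1 j))) {i<..k} (D2 i)"
    by blast
  moreover have "\<forall>j\<in>{1..k}. D1 j \<subseteq> R j \<and> Min (D1 j) \<in> D1 j \<and>
      homogeneous_on P (X \<inter> {..<Min (R j)}) (D1 j)"
    using D1 D1_min by blast
  ultimately show thesis using that by blast
qed

lemma cross_homogeneous_refinement:
  fixes P :: "nat \<Rightarrow> nat \<Rightarrow> bool"
  assumes sparse: "exp_sparse X" and "y0 \<in> X"
    and R: "\<forall>j\<in>{1..k}. omega_large (Suc (Suc g)) (R j) \<and> R j \<subseteq> X \<and> (\<forall>x\<in>R j. y0 < x \<and> 4 ^ k < x)"
    and ordered: "\<forall>i\<in>{1..k}. \<forall>j\<in>{1..k}. i < j \<longrightarrow> set_less (R i) (R j)"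
  obtains Z c where "Z 0 = {y0}" "\<forall>i\<in>{1..k}. Z i \<subseteq> R i \<and> omega_large g (Z i)"
    and "\<forall>i j. i < j \<longrightarrow> j \<le> k \<longrightarrow> set_less (Z i) (Z j) \<and> (\<forall>x\<in>Z i. \<forall>z\<in>Z j. P x z = c i j)"
proof -
  have R_sub: "R j \<subseteq> X" and R_large: "omega_large (Suc (Suc g)) (R j)"
    and R_above: "\<forall>x\<in>R j. y0 < x \<and> 4 ^ k < x" if "j \<in> {1..k}" for j
    using R that by blast+
  have "\<forall>j\<in>{1..k}. omega_large (Suc (Suc g)) (R j) \<and> R j \<subseteq> X \<and> (\<forall>x\<in>R j. 4 ^ k < x)"
    using R by blast
  txt \<open>By the first thinning, \<open>P x z = P x (Min (D1 j))\<close> for \<open>x\<close> in an earlier block and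
    \<open>z\<close> in block \<open>j\<close>; by the second one, this does not depend on \<open>x\<close> within its block.\<close>
  from doubly_homogeneous_subblocks[OF sparse this, of P]
  obtain D1 D2 where
    D1: "\<forall>j\<in>{1..k}. D1 j \<subseteq> R j \<and> Min (D1 j) \<in> D1 j \<and>
      homogeneous_on P (X \<inter> {..<Min (R j)}) (D1 j)"
    and D2: "\<forall>i\<in>{1..k}. D2 i \<subseteq> D1 i \<and> omega_large g (D2 i) \<and>
      homogeneous_on (\<lambda>j x. P x (Min (D1 j))) {i<..k} (D2 i)"
    by blast
  define Z where "Z i = (if i = 0 then {y0} else D2 i)" for i
  define c where "c i j = P (Min (Z i)) (Min (D1 j))" for i j
  have Z: "Z i \<subseteq> D1 i" "Z i \<subseteq> R i" "omega_large g (Z i)" if "i \<in> {1..k}" for i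
  proof -
    have "Z i = D2 i" using that unfolding Z_def by simp
    moreover have "D2 i \<subseteq> D1 i" "omega_large g (D2 i)" "D1 i \<subseteq> R i" using that D1 D2 by blast+
    ultimately show "Z i \<subseteq> D1 i" "Z i \<subseteq> R i" "omega_large g (Z i)" by auto
  qed
  have below: "x \<in> X \<inter> {..<Min (R j)}" if "i < j" "j \<le> k" "x \<in> Z i" for i j x
  proof -
    have j: "j \<in> {1..k}" using that by auto
    then have "Min (R j) \<in> R j" using R_large omega_large_finite_nonempty Min_in by blast
    show ?thesis
    proof (cases "i = 0")
      case True
      then have "x = y0" using that(3) unfolding Z_def by simp
      then show ?thesis using \<open>y0 \<in> X\<close> R_above[OF j] \<open>Min (R j) \<in> R j\<close> by auto
    next
      case False
      then have i: "i \<in> {1..k}" using that by simp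
      then have "x \<in> R i" "set_less (R i) (R j)" using that(1,3) Z(2) ordered j by blast+
      then show ?thesis using R_sub[OF i] \<open>Min (R j) \<in> R j\<close> unfolding set_less_def by auto
    qed
  qed
  have Z_ord: "set_less (Z i) (Z j)" if "i < j" "j \<le> k" for i j
    unfolding set_less_def
  proof (intro ballI)
    fix x z assume "x \<in> Z i" "z \<in> Z j"
    have j: "j \<in> {1..k}" using that by simp
    have "finite (R j)" "z \<in> R j"
      using Z(2)[OF j] \<open>z \<in> Z j\<close> R_large[OF j] omega_large_finite_nonempty by blast+
    then have "Min (R j) \<le> z" by simp
    then show "x < z" using below[OF that \<open>x \<in> Z i\<close>] by simp
  qed
  have Z_colour: "P x z = c i j" if "i < j" "j \<le> k" "x \<in> Z i" "z \<in> Z j" for i j x z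
  proof -
    have j: "j \<in> {1..k}" using that by auto
    have "homogeneous_on P (X \<inter> {..<Min (R j)}) (D1 j)" "Min (D1 j) \<in> D1 j" using D1 j by blast+
    moreover have "z \<in> D1 j" using that(4) Z(1)[OF j] by blast
    ultimately have "P x z = P x (Min (D1 j))"
      using homogeneous_onD[OF _ below[OF that(1-3)]] by blast
    also have "\<dots> = c i j"
    proof (cases "i = 0")
      case True
      then show ?thesis using that(3) unfolding c_def Z_def by simp
    next
      case False
      then have i: "i \<in> {1..k}" "j \<in> {i<..k}" using that by auto
      have "Min (Z i) \<in> Z i" using Z(3)[OF i(1)] omega_large_finite_nonempty Min_in by blast
      then have "x \<in> D2 i" "Min (Z i) \<in> D2 i" using that(3) False unfolding Z_def by auto
      moreover have "homogeneous_on (\<lambda>j x. P x (Min (D1 j))) {i<..k} (D2 i)" using D2 i by blast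
      ultimately show ?thesis
        using homogeneous_onD[of "\<lambda>j x. P x (Min (D1 j))", OF _ i(2)] unfolding c_def by blast
    qed
    finally show ?thesis .
  qed
  have Z_0: "Z 0 = {y0}" unfolding Z_def by simp
  show thesis
  proof (rule that[of Z c])
    show "\<forall>i\<in>{1..k}. Z i \<subseteq> R i \<and> omega_large g (Z i)" using Z(2,3) by blast
    show "\<forall>i j. i < j \<longrightarrow> j \<le> k \<longrightarrow> set_less (Z i) (Z j) \<and> (\<forall>x\<in>Z i. \<forall>z\<in>Z j. P x z = c i j)"
      by (intro allI impI conjI ballI Z_ord Z_colour)
  qed (rule Z_0)
qed

lemma transitive_on_singleton: "transitive_on P {a}"
  unfolding transitive_on_def by simp

lemma transitive_subset_of_blocks:
  fixes W :: "nat \<Rightarrow> nat set"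
  assumes "2 ^ y0 = Suc k" "W 0 = {y0}"
    and blocks: "\<forall>i\<in>{1..k}. omega_large n (W i) \<and> transitive_on P (W i)"
    and ordered: "\<forall>i j. i < j \<longrightarrow> j \<le> k \<longrightarrow> set_less (W i) (W j)"
    and colour: "\<forall>i j. i < j \<longrightarrow> j \<le> k \<longrightarrow> (\<forall>x\<in>W i. \<forall>z\<in>W j. P x z = c i j)"
  shows "\<exists>Y\<subseteq>(\<Union>i\<le>k. W i). omega_large (Suc n) Y \<and> transitive_on P Y"
proof -
  have "2 ^ y0 \<le> card {0..k}" using assms(1) by simp
  from prehomogeneous_subset[OF finite_atLeastAtMost this, of c]
  obtain I h where I: "I \<subseteq> {0..k}" "Min {0..k} \<in> I" "y0 + 1 \<le> card I"
      "\<forall>i\<in>I. \<forall>j\<in>I. i < j \<longrightarrow> c i j = h i"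
    by blast
  have "Min {0..k} = 0" by (rule Min_eqI) auto
  then have "0 \<in> I" using I(2) by simp
  have "finite I" using I(1) finite_subset by blast
  have in_range: "i \<le> k" if "i \<in> I" for i using I(1) that by auto
  have block: "omega_large n (W i)" "transitive_on P (W i)" if "i \<in> I" "i \<noteq> 0" for i
    using blocks in_range[OF that(1)] that(2) by auto
  let ?Y = "\<Union>i\<in>I. W i" and ?V = "\<Union>i\<in>I - {0}. W i"
  have trans: "transitive_on P ?Y"
  proof (rule transitive_on_UN[where h = h])
    show "\<forall>i\<in>I. transitive_on P (W i)"
      using block(2) assms(2) transitive_on_singleton by (metis (full_types))
    show "\<forall>i\<in>I. \<forall>j\<in>I. i < j \<longrightarrow> set_less (W i) (W j)" using ordered in_range by blast
    show "\<forall>i\<in>I. \<forall>j\<in>I. i < j \<longrightarrow> (\<forall>x\<in>W i. \<forall>z\<in>W j. P x z = h i)"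
    proof (intro ballI impI)
      fix i j x z assume "i \<in> I" "j \<in> I" "i < j" "x \<in> W i" "z \<in> W j"
      then have "c i j = h i" using I(4) by blast
      then show "P x z = h i"
        using colour \<open>i < j\<close> in_range[OF \<open>j \<in> I\<close>] \<open>x \<in> W i\<close> \<open>z \<in> W j\<close> by simp
    qed
  qed
  have Y_eq: "?Y = insert y0 ?V" using \<open>0 \<in> I\<close> assms(2) by blast
  have large: "omega_large (Suc n) ?Y"
    unfolding Y_eq
  proof (rule omega_large_Suc_insert)
    show "finite ?V" using \<open>finite I\<close> block(1) omega_large_finite_nonempty by auto
    show "\<forall>v\<in>?V. y0 < v"
    proof
      fix v assume "v \<in> ?V"
      then obtain i where "i \<in> I" "i \<noteq> 0" "v \<in> W i" by blast
      then show "y0 < v" using ordered in_range assms(2) unfolding set_less_def by auto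
    qed
    show "omega_blocks n (card (I - {0})) ?V"
      by (rule omega_blocks_UN) (use \<open>finite I\<close> block(1) ordered in_range in auto)
    show "y0 \<le> card (I - {0})" using \<open>0 \<in> I\<close> I(3) \<open>finite I\<close> by simp
  qed
  have "?Y \<subseteq> (\<Union>i\<le>k. W i)" using in_range by auto
  then show ?thesis using large trans by blast
qed

lemma omega_large_transitive_subset:
  fixes P :: "nat \<Rightarrow> nat \<Rightarrow> bool"
  shows "exp_sparse X \<Longrightarrow> omega_large (4 * n) X \<Longrightarrow> \<exists>Y\<subseteq>X. omega_large n Y \<and> transitive_on P Y"
proof (induction n arbitrary: X)
  case 0
  then have "Min X \<in> X" using omega_large_finite_nonempty Min_in by auto
  then show ?case using transitive_on_singleton by (intro exI[of _ "{Min X}"]) auto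
next
  case (Suc n)
  define y0 where "y0 = Min X"
  define k :: nat where "k = 2 ^ y0 - 1"
  have "y0 \<in> X" using Suc.prems(2) omega_large_finite_nonempty Min_in unfolding y0_def by blast
  have "(2::nat) ^ y0 \<le> 4 ^ y0" by (rule power_mono) simp_all
  then have "k \<le> 4 ^ Min X" unfolding k_def y0_def by arith
  txt \<open>Two of the four extra levels are used to find blocks above \<open>4 ^ k\<close>, two by the thinning.\<close>
  have four_Suc: "4 * Suc n = Suc (Suc (Suc (Suc (4 * n))))" by simp
  obtain R where R: "\<forall>j\<in>{1..k}. omega_large (Suc (Suc (4 * n))) (R j) \<and> R j \<subseteq> X \<and>
        (\<forall>x\<in>R j. y0 < x \<and> 4 ^ k < x)"
      "\<forall>i\<in>{1..k}. \<forall>j\<in>{1..k}. i < j \<longrightarrow> set_less (R i) (R j)"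
    using exp_sparse_blocks_above[OF Suc.prems(1) Suc.prems(2)[unfolded four_Suc] \<open>k \<le> 4 ^ Min X\<close>]
    unfolding y0_def by blast
  obtain Z c where Z: "Z 0 = {y0}" "\<forall>i\<in>{1..k}. Z i \<subseteq> R i \<and> omega_large (4 * n) (Z i)"
      "\<forall>i j. i < j \<longrightarrow> j \<le> k \<longrightarrow> set_less (Z i) (Z j) \<and> (\<forall>x\<in>Z i. \<forall>z\<in>Z j. P x z = c i j)"
    by (rule cross_homogeneous_refinement[OF Suc.prems(1) \<open>y0 \<in> X\<close> R])
  have Z_sub: "Z i \<subseteq> X" if "i \<le> k" for i
  proof (cases "i = 0")
    case True
    then show ?thesis using Z(1) \<open>y0 \<in> X\<close> by simp
  next
    case False
    then have "i \<in> {1..k}" using that by simp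
    then show ?thesis using Z(2) R(1) by blast
  qed
  have "\<forall>i\<in>{1..k}. \<exists>Y\<subseteq>Z i. omega_large n Y \<and> transitive_on P Y"
  proof
    fix i assume i: "i \<in> {1..k}"
    then have "exp_sparse (Z i)" using Z_sub exp_sparse_subset[OF Suc.prems(1)] by simp
    moreover have "omega_large (4 * n) (Z i)" using Z(2) i by blast
    ultimately show "\<exists>Y\<subseteq>Z i. omega_large n Y \<and> transitive_on P Y" by (rule Suc.IH)
  qed
  from bchoice[OF this]
  obtain Y' where Y': "\<forall>i\<in>{1..k}. Y' i \<subseteq> Z i \<and> omega_large n (Y' i) \<and> transitive_on P (Y' i)"
    by blast
  define W where "W i = (if i = 0 then {y0} else Y' i)" for i
  have W_sub: "W i \<subseteq> Z i" if "i \<le> k" for i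
    using that Y' Z(1) unfolding W_def by auto
  have "\<exists>Y\<subseteq>(\<Union>i\<le>k. W i). omega_large (Suc n) Y \<and> transitive_on P Y"
  proof (rule transitive_subset_of_blocks[where c = c])
    show "2 ^ y0 = Suc k" unfolding k_def by simp
    show "W 0 = {y0}" unfolding W_def by simp
    show "\<forall>i\<in>{1..k}. omega_large n (W i) \<and> transitive_on P (W i)" using Y' unfolding W_def by auto
    show "\<forall>i j. i < j \<longrightarrow> j \<le> k \<longrightarrow> set_less (W i) (W j)"
    proof (intro allI impI)
      fix i j :: nat assume "i < j" "j \<le> k"
      then have "set_less (Z i) (Z j)" "i \<le> k" using Z(3) by (blast, simp)
      from set_less_mono[OF this(1) W_sub[OF this(2)] W_sub[OF \<open>j \<le> k\<close>]]
      show "set_less (W i) (W j)" .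
    qed
    show "\<forall>i j. i < j \<longrightarrow> j \<le> k \<longrightarrow> (\<forall>x\<in>W i. \<forall>z\<in>W j. P x z = c i j)"
    proof (intro allI impI ballI)
      fix i j x z assume "i < j" "j \<le> k" "x \<in> W i" "z \<in> W j"
      moreover have "x \<in> Z i" "z \<in> Z j" using calculation W_sub[of i] W_sub[of j] by auto
      ultimately show "P x z = c i j" using Z(3) by blast
    qed
  qed
  then obtain Y where Y: "Y \<subseteq> (\<Union>i\<le>k. W i)" "omega_large (Suc n) Y" "transitive_on P Y"
    by blast
  have "(\<Union>i\<le>k. W i) \<subseteq> X"
  proof
    fix x assume "x \<in> (\<Union>i\<le>k. W i)"
    then obtain i where "i \<le> k" "x \<in> W i" by auto
    then show "x \<in> X" using W_sub Z_sub by blast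
  qed
  with Y(1) have "Y \<subseteq> X" by (rule subset_trans)
  then show ?case using Y(2,3) by blast
qed

lemma transitive_on_subset: "transitive_on P Y \<Longrightarrow> Z \<subseteq> Y \<Longrightarrow> transitive_on P Z"
  unfolding transitive_on_def by blast

lemma EM_large_if_omega_large:
  assumes "exp_sparse X" "omega_large (4 * n) X"
  shows "EM_large (omega_pow n) X"
  unfolding EM_large_def
proof
  fix P :: "nat \<Rightarrow> nat \<Rightarrow> bool"
  obtain Y where Y: "Y \<subseteq> X" "omega_large n Y" "transitive_on P Y"
    using omega_large_transitive_subset[OF assms] by blast
  obtain Y' where "Y' \<subseteq> Y" "large (omega_pow n) Y'"
    using omega_large_imp_large_subset[OF Y(2)] by blast
  then show "\<exists>Y\<subseteq>X. large (omega_pow n) Y \<and> transitive_on P Y"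
    using Y(1) transitive_on_subset[OF Y(3)] by blast
qed

theorem theorem2p10:
  fixes n :: nat and X :: "nat set"
  assumes "finite X"
    and "large (omega_pow (36 * n)) X"
    and "exp_sparse X"
  shows "EM_large (omega_pow n) X"
proof -
  have large: "omega_large (36 * n) X" using large_imp_omega_large[OF assms(2)] .
  then have "Min X \<in> X" using omega_large_finite_nonempty Min_in by blast
  then have "1 \<le> Min X" using assms(3) unfolding exp_sparse_def by fastforce
  then have "omega_large (4 * n) X" using omega_large_antimono[OF large] by simp
  then show ?thesis using EM_large_if_omega_large[OF assms(3)] by blast
qed

end
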